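(* Let $N=p^l$ with $p$ an odd prime, $l\ge1$, and $N\equiv1\pmod 4$. Let $i\in\mathbb{F}_N$ be one of the two elements with $i^2=-1$, and fix $\nu\in\bar{Q}$. For $\Delta\in\{1,-1\}$ and $t\in\mathbb{F}_N$ let $C_{\Delta,t}$ be the conjugacy class in $\mathrm{ESL}(2,\mathbb{F}_N)$ of $\begin{pmatrix}0&-\Delta\\1&t\end{pmatrix}$; for $t\in\{\pm2,\pm2i\}$ let $\bar{C}_t$ be the conjugacy class of $\begin{pmatrix}0&-\frac{t^2}{4\nu}\\ \nu&t\end{pmatrix}$ and $D_t$ the conjugacy class of $\begin{pmatrix}t/2&0\\0&t/2\end{pmatrix}$. Then the conjugacy classes of $\mathrm{ESL}(2,\mathbb{F}_N)$ are exactly the $2N$ classes $C_{\Delta,t}$ ($\Delta=\pm1$, $t\in\mathbb{F}_N$) together with the $8$ classes $\bar{C}_{\pm2},\bar{C}_{\pm2i},D_{\pm2},D_{\pm2i}$, and these $2N+8$ classes are pairwise distinct. Moreover, for $F=\begin{pmatrix}\alpha&\beta\\\gamma&\delta\end{pmatrix}\in\mathrm{ESL}(2,\mathbb{F}_N)$ with $\Delta=\det F$, $t=\operatorname{tr}F$: (1) if $t^2-4\Delta\neq0$ then $F\in C_{\Delta,t}$; (2) if $t^2-4\Delta=0$ then $F\in C_{\Delta,t}$ if $\beta\in Q$ or $\gamma\in Q$; $F\in\bar{C}_t$ if $\beta\in\bar{Q}$ or $\gamma\in\bar{Q}$; and $F\in D_t$ if $\beta=\gamma=0$. (When $t^2-4\Delta=0$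 it cannot happen that one of $\beta,\gamma$ lies in $Q$ and the other in $\bar{Q}$.)
   Context: $\mathbb{F}_N$ is the finite field with $N$ elements and $\mathbb{F}_N^{*}$ its nonzero elements. $Q=\{x\in\mathbb{F}_N^{*}: x=y^2\text{ for some }y\in\mathbb{F}_N^{*}\}$ and $\bar{Q}=\mathbb{F}_N^{*}\setminus Q$. $\mathrm{ESL}(2,\mathbb{F}_N)$ is the group of $2\times2$ matrices over $\mathbb{F}_N$ with determinant $\pm1$; conjugacy is taken within this group. *)

theory Defs
  imports "HOL-Analysis.Analysis"
begin

text \<open>2x2 matrices over a field are represented as 'a^2^2 (rows, then columns);
  entry (r,c) is A$r$c with r,c :: 2.\<close>

definition mat2 :: "'a::zero \<Rightarrow> 'a \<Rightarrow> 'a \<Rightarrow> 'a \<Rightarrow> 'a^2^2" where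
  "mat2 a b c d = (\<chi> r s. if r = 1 then (if s = 1 then a else b) else (if s = 1 then c else d))"

definition ESL :: "(('a::field)^2^2) set" where
  "ESL = {A. det A = 1 \<or> det A = -1}"

definition conj_class :: "('a::field)^2^2 \<Rightarrow> ('a^2^2) set" where
  "conj_class A = {P ** A ** matrix_inv P | P. P \<in> ESL}"

definition QR :: "('a::field) set" where
  "QR = {x. x \<noteq> 0 \<and> (\<exists>y. y \<noteq> 0 \<and> x = y^2)}"

definition QN :: "('a::field) set" where
  "QN = (UNIV - {0}) - QR"

end

theory Submission
  imports Defs "HOL-Number_Theory.Residues"
begin

text \<open>The invariant behind the classification is the binary quadratic form attached to a matrix F,
  q_F(v) = det(v, F v) = \<gamma> x^2 + (\<delta> - \<alpha>) x y - \<beta> y^2.  If v is not an eigenvector, the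
  basis (v, F v) conjugates F to the companion matrix of its characteristic polynomial; hence two
  matrices with equal determinant and trace are conjugate in ESL as soon as their forms share a
  nonzero value (the two basis changes then have equal determinant).  Conversely conjugation by P
  multiplies the form by det P = \<plusminus>1, so the set of values up to sign is a class invariant.\<close>

lemma mat2_nth [simp]:
  "mat2 a b c d $ 1 $ 1 = a" "mat2 a b c d $ 1 $ 2 = b"
  "mat2 a b c d $ 2 $ 1 = c" "mat2 a b c d $ 2 $ 2 = d"
  by (simp_all add: mat2_def)

lemma mat2_eta: "(A::'a::zero^2^2) = mat2 (A$1$1) (A$1$2) (A$2$1) (A$2$2)"
  unfolding mat2_def vec_eq_iff forall_2 by simp

lemma mat2_eq_iff: "mat2 a b c d = mat2 a' b' c' d' \<longleftrightarrow> a = a' \<and> b = b' \<and> c = c' \<and> d = d'"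
  by (metis mat2_nth)

lemma mat2_mult: "mat2 a b c d ** mat2 e f g h =
   mat2 (a*e+b*g) (a*f+b*h) (c*e+d*g) (c*f+(d::'a::semiring_1)*h)"
  unfolding vec_eq_iff forall_2 matrix_matrix_mult_def by (simp add: UNIV_2)

lemma det_mat2: "det (mat2 a b c (d::'a::comm_ring_1)) = a*d - b*c"
  by (simp add: det_2)

lemma trace_mat2: "trace (mat2 a b c (d::'a::comm_ring_1)) = a + d"
  by (simp add: trace_def UNIV_2)

text \<open>The library defines matrix_inv by choice; for nonsingular matrices it is a two-sided inverse.\<close>
lemma matrix_inv_nonsingular:
  fixes P :: "'a::field^'n^'n"
  assumes "det P \<noteq> 0"
  shows "P ** matrix_inv P = mat 1" "matrix_inv P ** P = mat 1"
proof -
  have "\<exists>P'. P ** P' = mat 1 \<and> P' ** P = mat 1"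
    using assms invertible_det_nz invertible_def by blast
  then have "P ** matrix_inv P = mat 1 \<and> matrix_inv P ** P = mat 1"
    unfolding matrix_inv_def by (rule someI_ex)
  then show "P ** matrix_inv P = mat 1" "matrix_inv P ** P = mat 1" by simp_all
qed

lemma det_matrix_inv:
  fixes P :: "'a::field^'n^'n"
  assumes "det P \<noteq> 0"
  shows "det (matrix_inv P) = 1 / det P"
  using det_mul[of P "matrix_inv P"] matrix_inv_nonsingular[OF assms] assms
  by (simp add: field_simps)

section \<open>Conjugacy in ESL(2,F)\<close>

lemma conj_class_iff:
  "X \<in> conj_class (A::'a::field^2^2) \<longleftrightarrow> (\<exists>P. (det P = 1 \<or> det P = -1) \<and> X ** P = P ** A)"
proof
  assume "X \<in> conj_class A"
  then obtain P where P: "det P = 1 \<or> det P = -1" "X = P ** A ** matrix_inv P"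
    unfolding conj_class_def ESL_def by blast
  then have "X ** P = P ** A"
    using matrix_inv_nonsingular[of P] by (auto simp flip: matrix_mul_assoc)
  with P(1) show "\<exists>P. (det P = 1 \<or> det P = -1) \<and> X ** P = P ** A" by blast
next
  assume "\<exists>P. (det P = 1 \<or> det P = -1) \<and> X ** P = P ** A"
  then obtain P where P: "det P = 1 \<or> det P = -1" "X ** P = P ** A" by blast
  then have "P ** A ** matrix_inv P = X ** (P ** matrix_inv P)"
    by (simp add: matrix_mul_assoc)
  also have "\<dots> = X" using matrix_inv_nonsingular[of P] P(1) by auto
  finally have "P ** A ** matrix_inv P = X" .
  with P(1) show "X \<in> conj_class A" unfolding conj_class_def ESL_def by blast
qed

lemma conj_refl: "A \<in> conj_class (A::'a::field^2^2)"
  unfolding conj_class_iff by (rule exI[of _ "mat 1"]) simp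

lemma conj_trans:
  assumes "X \<in> conj_class A" "A \<in> conj_class (B::'a::field^2^2)"
  shows "X \<in> conj_class B"
proof -
  obtain P where P: "det P = 1 \<or> det P = -1" "X ** P = P ** A"
    using assms(1) conj_class_iff by blast
  obtain Q where Q: "det Q = 1 \<or> det Q = -1" "A ** Q = Q ** B"
    using assms(2) conj_class_iff by blast
  have "X ** (P ** Q) = P ** Q ** B" using P(2) Q(2) by (metis matrix_mul_assoc)
  moreover have "det (P ** Q) = 1 \<or> det (P ** Q) = -1" using P(1) Q(1) by (auto simp: det_mul)
  ultimately show ?thesis unfolding conj_class_iff by blast
qed

lemma conj_sym:
  assumes "X \<in> conj_class (A::'a::field^2^2)"
  shows "A \<in> conj_class X"
proof -
  obtain P where P: "det P = 1 \<or> det P = -1" "X ** P = P ** A"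
    using assms conj_class_iff by blast
  have inv: "P ** matrix_inv P = mat 1" "matrix_inv P ** P = mat 1"
    using matrix_inv_nonsingular[of P] P(1) by auto
  have "A ** matrix_inv P = matrix_inv P ** (P ** A) ** matrix_inv P"
    using inv by (simp add: matrix_mul_assoc)
  also have "\<dots> = matrix_inv P ** X ** (P ** matrix_inv P)"
    by (simp flip: P(2) add: matrix_mul_assoc)
  also have "\<dots> = matrix_inv P ** X" using inv by simp
  finally have "A ** matrix_inv P = matrix_inv P ** X" .
  moreover have "det (matrix_inv P) = 1 \<or> det (matrix_inv P) = -1"
    using P(1) det_matrix_inv[of P] by auto
  ultimately show ?thesis unfolding conj_class_iff by blast
qed

lemma conj_class_eq:
  assumes "X \<in> conj_class (A::'a::field^2^2)"
  shows "conj_class X = conj_class A"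
  using assms conj_trans conj_sym by blast

lemma conj_det:
  assumes "X \<in> conj_class (A::'a::field^2^2)"
  shows "det X = det A"
proof -
  obtain P where P: "det P = 1 \<or> det P = -1" "X ** P = P ** A"
    using assms conj_class_iff by blast
  have "det X * det P = det A * det P"
    using arg_cong[OF P(2), of det] by (simp add: det_mul mult.commute)
  then show ?thesis using P(1) by auto
qed

lemma conj_trace:
  assumes "X \<in> conj_class (A::'a::field^2^2)"
  shows "trace X = trace A"
proof -
  obtain P where P: "P \<in> ESL" "X = P ** A ** matrix_inv P"
    using assms unfolding conj_class_def by blast
  have inv: "matrix_inv P ** P = mat 1"
    using matrix_inv_nonsingular[of P] P(1) by (auto simp: ESL_def)
  have "trace X = trace (P ** (A ** matrix_inv P))" using P(2) by (simp add: matrix_mul_assoc)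
  also have "\<dots> = trace (A ** matrix_inv P ** P)" by (rule trace_mul_sym)
  also have "\<dots> = trace (A ** (matrix_inv P ** P))" by (simp add: matrix_mul_assoc)
  also have "\<dots> = trace A" using inv by simp
  finally show ?thesis .
qed

lemma conj_class_eq_invariants:
  "conj_class X = conj_class (Y::'a::field^2^2) \<Longrightarrow> det X = det Y \<and> trace X = trace Y"
  using conj_refl[of X] conj_det conj_trace by blast

section \<open>The quadratic form of a matrix and the conjugacy criterion\<close>

text \<open>For F and a vector v = (x,y), the matrix with columns v and F v.  When it is nonsingular,
  it conjugates F to the companion matrix of its characteristic polynomial.\<close>
definition cyclic_basis :: "'a::comm_ring_1^2^2 \<Rightarrow> 'a \<Rightarrow> 'a \<Rightarrow> 'a^2^2" where
  "cyclic_basis F x y = mat2 x (F$1$1*x + F$1$2*y) y (F$2$1*x + F$2$2*y)"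

text \<open>The binary quadratic form attached to F: its value at v is det(v, F v).\<close>
definition cyclic_det :: "'a::comm_ring_1^2^2 \<Rightarrow> 'a \<Rightarrow> 'a \<Rightarrow> 'a" where
  "cyclic_det F x y = F$2$1*x^2 + (F$2$2 - F$1$1)*x*y - F$1$2*y^2"

definition companion :: "'a::comm_ring_1 \<Rightarrow> 'a \<Rightarrow> 'a^2^2" where
  "companion \<Delta> t = mat2 0 (-\<Delta>) 1 t"

lemma det_cyclic_basis: "det (cyclic_basis F x y) = cyclic_det F x y"
  unfolding cyclic_basis_def cyclic_det_def det_mat2 by (simp add: algebra_simps power2_eq_square)

lemma cyclic_det_mat2: "cyclic_det (mat2 a b c d) x y = c*x^2 + (d-a)*x*y - b*y^2"
  by (simp add: cyclic_det_def)

text \<open>Cayley-Hamilton in the cyclic basis: F acts on (v, F v) by its companion matrix.\<close>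
lemma cyclic_basis_companion:
  "F ** cyclic_basis F x y = cyclic_basis F x y ** companion (det F) (trace F)"
proof -
  obtain a b c d where "F = mat2 a b c d" by (metis mat2_eta)
  then show ?thesis unfolding cyclic_basis_def companion_def
    by (simp add: mat2_mult mat2_eq_iff det_mat2 trace_mat2 algebra_simps)
qed

lemma cyclic_basis_conj:
  fixes X A P :: "'a::comm_ring_1^2^2"
  assumes "X ** P = P ** A"
  shows "cyclic_basis X (P$1$1*x + P$1$2*y) (P$2$1*x + P$2$2*y) = P ** cyclic_basis A x y"
proof -
  obtain a b c d where A: "A = mat2 a b c d" by (metis mat2_eta)
  obtain x1 x2 x3 x4 where X: "X = mat2 x1 x2 x3 x4" by (metis mat2_eta)
  obtain p1 p2 p3 p4 where P: "P = mat2 p1 p2 p3 p4" by (metis mat2_eta)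
  have "x1*p1+x2*p3 = p1*a+p2*c" "x1*p2+x2*p4 = p1*b+p2*d"
       "x3*p1+x4*p3 = p3*a+p4*c" "x3*p2+x4*p4 = p3*b+p4*d"
    using assms by (simp_all add: A X P mat2_mult mat2_eq_iff)
  then have "x*(x1*p1+x2*p3) + y*(x1*p2+x2*p4) = x*(p1*a+p2*c) + y*(p1*b+p2*d)"
            "x*(x3*p1+x4*p3) + y*(x3*p2+x4*p4) = x*(p3*a+p4*c) + y*(p3*b+p4*d)"
    by simp_all
  then show ?thesis
    unfolding A X P cyclic_basis_def by (simp add: mat2_mult mat2_eq_iff algebra_simps)
qed

lemma cyclic_det_conj_value:
  assumes "X \<in> conj_class (A::'a::field^2^2)"
  shows "\<exists>x' y'. cyclic_det X x y = cyclic_det A x' y' \<or> cyclic_det X x y = - cyclic_det A x' y'"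
proof -
  obtain P where P: "det P = 1 \<or> det P = -1" "A ** P = P ** X"
    using conj_sym[OF assms] conj_class_iff by blast
  have "cyclic_det A (P$1$1*x + P$1$2*y) (P$2$1*x + P$2$2*y) = det P * cyclic_det X x y"
    using arg_cong[OF cyclic_basis_conj[OF P(2)], of det] by (simp add: det_mul det_cyclic_basis)
  then show ?thesis using P(1) by (metis mult_1 mult_minus1 minus_minus)
qed

text \<open>Converse criterion: matrices with the same determinant and trace are conjugate as soon as
  their forms take a common nonzero value (both are then conjugate to the companion matrix by a
  cyclic basis, and the two basis changes have the same determinant).\<close>
lemma conj_if_common_value:
  fixes F G :: "'a::field^2^2"
  assumes "det F = det G" "trace F = trace G"
    and "cyclic_det F x y = cyclic_det G u v" "cyclic_det G u v \<noteq> 0"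
  shows "F \<in> conj_class G"
proof -
  define PF where "PF = cyclic_basis F x y"
  define PG where "PG = cyclic_basis G u v"
  define M where "M = companion (det G) (trace G)"
  have dG: "det PG \<noteq> 0" using assms(4) by (simp add: PG_def det_cyclic_basis)
  note inv = matrix_inv_nonsingular[OF dG]
  have hF: "F ** PF = PF ** M" using cyclic_basis_companion[of F] assms(1,2) by (simp add: PF_def M_def)
  have hG: "G ** PG = PG ** M" using cyclic_basis_companion[of G] by (simp add: PG_def M_def)
  have "M ** matrix_inv PG = matrix_inv PG ** (PG ** M) ** matrix_inv PG"
    using inv by (simp add: matrix_mul_assoc)
  also have "\<dots> = matrix_inv PG ** G ** (PG ** matrix_inv PG)"
    by (simp flip: hG add: matrix_mul_assoc)
  finally have MG: "M ** matrix_inv PG = matrix_inv PG ** G" using inv by simp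
  define P where "P = PF ** matrix_inv PG"
  have "F ** P = PF ** (M ** matrix_inv PG)" using hF by (simp add: P_def matrix_mul_assoc)
  also have "\<dots> = P ** G" using MG by (simp add: P_def matrix_mul_assoc)
  finally have "F ** P = P ** G" .
  moreover have "det P = 1" using assms(3,4) dG
    by (simp add: P_def det_mul det_matrix_inv PF_def PG_def det_cyclic_basis)
  ultimately show ?thesis unfolding conj_class_iff by blast
qed

section \<open>Squares in finite fields of odd order\<close>

text \<open>A field of odd order has characteristic \<noteq> 2, as the characteristic divides the order.\<close>
lemma two_nonzero_odd_card:
  assumes "odd CARD('a::{finite,field})"
  shows "(2::'a) \<noteq> 0"
proof
  assume "(2::'a) = 0"
  then have "CHAR('a) dvd 2" using of_nat_eq_0_iff_char_dvd[where 'a='a, of 2] by simp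
  moreover have "coprime 2 CARD('a)" using assms by simp
  ultimately have "coprime (CHAR('a)) CARD('a)" by (rule coprime_divisors[OF _ dvd_refl])
  then have "is_unit (CHAR('a))" using coprime_absorb_left[OF CHAR_dvd_CARD] by blast
  then show False by simp
qed

lemma four_nonzero: "(2::'a::field) \<noteq> 0 \<Longrightarrow> (4::'a) \<noteq> 0"
  by (metis mult_eq_0_iff mult_2 numeral_Bit0 one_add_one)

lemma one_ne_minus_one: "(2::'a::field) \<noteq> 0 \<Longrightarrow> (1::'a) \<noteq> -1"
  by (metis one_add_one add.right_inverse)

text \<open>Squaring is at most two-to-one (u^2 = w^2 forces w = \<plusminus>u), so at least half of the field
  consists of squares.  Injectivity of u \<mapsto> (u^2, u is the chosen root) makes this precise.\<close>
lemma card_le_twice_squares: "CARD('a::{finite,field}) \<le> 2 * card (range (\<lambda>u::'a. u^2))"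
proof -
  define root where "root s = (SOME x::'a. x^2 = s)" for s
  have root: "root (u^2) ^ 2 = u^2" for u unfolding root_def by (rule someI_ex) blast
  define g where "g u = (u^2, u = root (u^2))" for u
  have "inj g"
  proof
    fix u w assume "g u = g w"
    then have sq: "u^2 = w^2" and chosen: "(u = root (u^2)) = (w = root (w^2))"
      by (auto simp: g_def)
    show "u = w"
    proof (cases "u = root (u^2)")
      case True then show ?thesis using sq chosen by simp
    next
      case False
      have "root (u^2) = u \<or> root (u^2) = -u" using root[of u] power2_eq_iff by blast
      moreover have "root (u^2) = w \<or> root (u^2) = -w" using root[of w] sq power2_eq_iff by metis
      ultimately show ?thesis using False sq chosen by auto
    qed
  qed
  moreover have "range g \<subseteq> range (\<lambda>u::'a. u^2) \<times> UNIV" by (auto simp: g_def)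
  ultimately have "CARD('a) \<le> card (range (\<lambda>u::'a. u^2) \<times> (UNIV::bool set))"
    by (intro card_inj_on_le) auto
  then show ?thesis by (simp add: card_cartesian_product mult.commute)
qed

lemma range_square: "range (\<lambda>u::'a::field. u^2) = insert 0 QR"
  unfolding QR_def by (auto simp: image_def)

lemma QR_QN_partition: "QR \<union> QN = UNIV - {0}" "QR \<inter> QN = {}"
  unfolding QN_def QR_def by auto

lemma nonzero_QR_or_QN: "(x::'a::field) \<noteq> 0 \<Longrightarrow> x \<in> QR \<or> x \<in> QN"
  by (auto simp: QN_def)

lemma QR_iff: "x \<in> QR \<longleftrightarrow> (\<exists>s. s \<noteq> 0 \<and> x = s^2)"
  by (auto simp: QR_def)

lemma card_QN_le_QR:
  assumes "odd CARD('a::{finite,field})"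
  shows "card (QN::'a set) \<le> card (QR::'a set)"
proof -
  have "0 \<notin> (QR::'a set)" by (simp add: QR_def)
  then have squares: "CARD('a) \<le> 2 * card (QR::'a set) + 2"
    using card_le_twice_squares[where 'a='a] by (simp add: range_square)
  have "card (QR::'a set) + card (QN::'a set) = card (QR \<union> QN :: 'a set)"
    using QR_QN_partition by (intro card_Un_disjoint[symmetric]) auto
  also have "\<dots> = CARD('a) - 1" by (simp add: QR_QN_partition card_Diff_singleton)
  finally have "card (QR::'a set) + card (QN::'a set) = CARD('a) - 1" .
  moreover obtain k where "CARD('a) = 2*k + 1" using assms oddE by blast
  ultimately show ?thesis using squares by presburger
qed

text \<open>x Q = Qbar for a nonsquare x (an injection Q \<rightarrow> Qbar with |Qbar| \<le> |Q|); hence the product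
  of two nonsquares is a square.\<close>
lemma QN_times_QN:
  assumes "odd CARD('a::{finite,field})" "x \<in> QN" "y \<in> (QN::'a set)"
  shows "x * y \<in> QR"
proof -
  have x0: "x \<noteq> 0" using assms(2) by (simp add: QN_def)
  have into: "(\<lambda>z. x * z) ` QR \<subseteq> QN"
  proof
    fix v assume "v \<in> (\<lambda>z. x * z) ` QR"
    then obtain w where w: "w \<noteq> 0" "v = x * w^2" by (auto simp: QR_def)
    have "v \<notin> QR"
    proof
      assume "v \<in> QR"
      then obtain s where "s \<noteq> 0" "v = s^2" by (auto simp: QR_def)
      then have "x = (s/w)^2" "s/w \<noteq> 0" using w by (simp_all add: field_simps power2_eq_square)
      then show False using assms(2) x0 unfolding QN_def QR_def by blast
    qed
    then show "v \<in> QN" using w x0 by (simp add: QN_def)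
  qed
  have "card ((\<lambda>z. x * z) ` QR) = card (QR::'a set)"
    using x0 by (intro card_image) (auto simp: inj_on_def)
  then have "(\<lambda>z. x * z) ` QR = QN"
    using into card_QN_le_QR[OF assms(1)] card_mono[OF _ into]
    by (intro card_subset_eq) auto
  then obtain w where w: "w \<noteq> 0" "y = x * w^2" using assms(3) by (auto simp: QR_def)
  have "x * y = (x*w)^2" using w by (simp add: power2_eq_square)
  then show ?thesis unfolding QR_iff using x0 w by (metis mult_eq_0_iff)
qed

text \<open>Over a finite field of odd order, every binary quadratic form with nonzero discriminant
  represents 1: the sets {u^2} and {4a + D z^2} each contain more than half of the field.\<close>
lemma nondegenerate_form_represents_one:
  fixes a b c :: "'a::{finite,field}"
  assumes "odd CARD('a)" "b^2 - 4*a*c \<noteq> 0"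
  shows "\<exists>x y. a*x^2 + b*x*y + c*y^2 = 1"
proof (cases "a = 0")
  case True
  then have "b \<noteq> 0" using assms(2) by simp
  then show ?thesis using True by (intro exI[of _ "(1-c)/b"] exI[of _ 1]) (simp add: field_simps)
next
  case False
  have two: "(2::'a) \<noteq> 0" using two_nonzero_odd_card[OF assms(1)] .
  define D where "D = b^2 - 4*a*c"
  have D: "D \<noteq> 0" using assms(2) by (simp add: D_def)
  define S where "S = range (\<lambda>u::'a. u^2)"
  define T where "T = (\<lambda>v. 4*a + D * v) ` S"
  have "card T = card S" unfolding T_def using D by (intro card_image) (auto simp: inj_on_def)
  have "S \<inter> T \<noteq> {}"
  proof
    assume "S \<inter> T = {}"
    then have "card S + card T \<le> CARD('a)"
      using card_Un_disjoint[of S T] card_mono[of UNIV "S \<union> T"] by simp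
    moreover have "CARD('a) \<le> 2 * card S" using card_le_twice_squares by (simp add: S_def)
    ultimately have "CARD('a) = 2 * card S" using \<open>card T = card S\<close> by linarith
    then show False using assms(1) by simp
  qed
  then obtain u z where uz: "u^2 = 4*a + D*z^2" unfolding S_def T_def by auto
  define x where "x = (u - b*z)/(2*a)"
  have hx: "2*a*x + b*z = u" using False two by (simp add: x_def field_simps)
  have "4*a*(a*x^2 + b*x*z + c*z^2) = (2*a*x + b*z)^2 - D*z^2"
    by (simp add: D_def algebra_simps power2_eq_square)
  also have "\<dots> = 4*a*1" using hx uz by simp
  finally have "4*a*(a*x^2 + b*x*z + c*z^2) = 4*a*1" .
  moreover have "4*a \<noteq> 0" using False four_nonzero[OF two] by simp
  ultimately show ?thesis by (metis mult_left_cancel)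
qed

lemma QR_uminus:
  assumes "i^2 = (-1::'a::field)" "x \<in> QR"
  shows "-x \<in> (QR::'a set)"
proof -
  obtain y where "y \<noteq> 0" "x = y^2" using assms(2) by (auto simp: QR_def)
  moreover have "i \<noteq> 0" using assms(1) by auto
  ultimately show ?thesis using assms(1) by (auto simp: QR_iff power_mult_distrib intro!: exI[of _ "i*y"])
qed

lemma QN_uminus:
  assumes "i^2 = (-1::'a::field)" "x \<in> QN"
  shows "-x \<in> (QN::'a set)"
  using assms QR_uminus[OF assms(1), of "-x"] by (auto simp: QN_def)

text \<open>Representatives of the classes with square discriminant t^2 = 4\<Delta>: the twisted companion
  matrix (lower left entry the nonsquare \<nu>) and the scalar matrix t/2.\<close>
definition twisted :: "'a::field \<Rightarrow> 'a \<Rightarrow> 'a^2^2" where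
  "twisted \<nu> t = mat2 0 (-(t^2 / (4 * \<nu>))) \<nu> t"

definition scalar :: "'a::field \<Rightarrow> 'a^2^2" where
  "scalar t = mat2 (t/2) 0 0 (t/2)"

lemma det_companion: "det (companion \<Delta> t) = \<Delta>"
  and trace_companion: "trace (companion \<Delta> t) = t"
  and cyclic_det_companion: "cyclic_det (companion \<Delta> t) x y = x^2 + t*x*y + \<Delta>*y^2"
  by (simp_all add: companion_def det_mat2 trace_mat2 cyclic_det_mat2)

lemma det_twisted: "(\<nu>::'a::field) \<noteq> 0 \<Longrightarrow> det (twisted \<nu> t) = t^2/4"
  and trace_twisted: "trace (twisted \<nu> t) = t"
  by (simp_all add: twisted_def det_mat2 trace_mat2)

lemma cyclic_det_twisted:
  fixes \<nu> t :: "'a::field"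
  assumes "(2::'a) \<noteq> 0" "\<nu> \<noteq> 0"
  shows "cyclic_det (twisted \<nu> t) x y = \<nu> * (x + t*y/(2*\<nu>))^2"
proof -
  have "(4::'a) \<noteq> 0" using four_nonzero[OF assms(1)] .
  then show ?thesis using assms by (simp add: twisted_def cyclic_det_mat2 field_simps power2_eq_square)
qed

lemma det_scalar: "det (scalar t) = (t::'a::field)^2/4"
  and trace_scalar: "(2::'a) \<noteq> 0 \<Longrightarrow> trace (scalar t) = t"
  and cyclic_det_scalar: "cyclic_det (scalar t) x y = 0"
  by (simp_all add: scalar_def det_mat2 trace_mat2 cyclic_det_mat2 power2_eq_square)

lemma discriminant_entries:
  fixes F :: "'a::comm_ring_1^2^2"
  shows "trace F^2 - 4 * det F = (F$2$2 - F$1$1)^2 + 4 * F$1$2 * F$2$1"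
proof -
  obtain a b c d where "F = mat2 a b c d" by (metis mat2_eta)
  then show ?thesis by (simp add: det_mat2 trace_mat2 algebra_simps power2_eq_square)
qed

text \<open>A form value s^2 \<noteq> 0 matches the value of the companion form at (s,0).\<close>
lemma conj_companion_if_square_value:
  fixes F :: "'a::field^2^2"
  assumes "cyclic_det F x y = s^2" "s \<noteq> 0"
  shows "F \<in> conj_class (companion (det F) (trace F))"
  using assms by (intro conj_if_common_value[where u = s and v = 0])
    (simp_all add: det_companion trace_companion cyclic_det_companion)

text \<open>A form value \<nu> s^2 \<noteq> 0 matches the value of the twisted form at (s,0).\<close>
lemma conj_twisted_if_twisted_value:
  fixes F :: "'a::field^2^2"
  assumes "(2::'a) \<noteq> 0" "\<nu> \<noteq> 0" "trace F^2 = 4 * det F"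
    and "cyclic_det F x y = \<nu> * s^2" "s \<noteq> 0"
  shows "F \<in> conj_class (twisted \<nu> (trace F))"
proof (rule conj_if_common_value[where u = s and v = 0])
  have "(4::'a) \<noteq> 0" using four_nonzero[OF assms(1)] .
  then show "det F = det (twisted \<nu> (trace F))" using assms(2,3) by (simp add: det_twisted)
qed (use assms in \<open>simp_all add: trace_twisted cyclic_det_twisted\<close>)

lemma cyclic_det_axes: "cyclic_det F 1 0 = F$2$1" "cyclic_det F 0 1 = - F$1$2"
  by (simp_all add: cyclic_det_def)

text \<open>(1) Nonzero discriminant: the form is nondegenerate, so it represents 1 = 1^2.\<close>
lemma classify_nondegenerate:
  fixes F :: "'a::{finite,field}^2^2"
  assumes "odd CARD('a)" "trace F^2 - 4 * det F \<noteq> 0"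
  shows "F \<in> conj_class (companion (det F) (trace F))"
proof -
  have "(F$2$2 - F$1$1)^2 - 4 * F$2$1 * (- F$1$2) = trace F^2 - 4 * det F"
    using discriminant_entries[of F] by (simp add: algebra_simps)
  then have "(F$2$2 - F$1$1)^2 - 4 * F$2$1 * (- F$1$2) \<noteq> 0" using assms(2) by simp
  then obtain x y where "F$2$1 * x^2 + (F$2$2 - F$1$1) * x * y + (- F$1$2) * y^2 = 1"
    using nondegenerate_form_represents_one[OF assms(1)] by blast
  then have "cyclic_det F x y = 1^2" by (simp add: cyclic_det_def)
  then show ?thesis by (rule conj_companion_if_square_value) simp
qed

text \<open>(2a) A square off-diagonal entry is a square value of the form (using that -1 is a square).\<close>
lemma classify_square_entry:
  fixes F :: "'a::field^2^2" and i :: 'a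
  assumes "i^2 = -1" "F$1$2 \<in> QR \<or> F$2$1 \<in> QR"
  shows "F \<in> conj_class (companion (det F) (trace F))"
proof -
  have "F$2$1 \<in> QR \<or> cyclic_det F 0 1 \<in> QR"
    using assms QR_uminus[OF assms(1), of "F$1$2"] by (auto simp: cyclic_det_axes)
  then obtain x y s where "cyclic_det F x y = s^2" "s \<noteq> 0"
    using cyclic_det_axes(1) QR_iff by metis
  then show ?thesis by (rule conj_companion_if_square_value)
qed

text \<open>(2b) A nonsquare off-diagonal entry is a value \<nu> s^2 of the form, since Qbar = \<nu> Q.\<close>
lemma classify_nonsquare_entry:
  fixes F :: "'a::{finite,field}^2^2" and i \<nu> :: 'a
  assumes "odd CARD('a)" "i^2 = -1" "\<nu> \<in> QN" "trace F^2 = 4 * det F"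
    and "F$1$2 \<in> QN \<or> F$2$1 \<in> QN"
  shows "F \<in> conj_class (twisted \<nu> (trace F))"
proof -
  have \<nu>0: "\<nu> \<noteq> 0" using assms(3) by (simp add: QN_def)
  obtain x y where "cyclic_det F x y \<in> QN"
    using assms(5) QN_uminus[OF assms(2), of "F$1$2"] cyclic_det_axes by metis
  then have "cyclic_det F x y * \<nu> \<in> QR" using QN_times_QN[OF assms(1) _ assms(3)] by blast
  then obtain r where r: "r \<noteq> 0" "cyclic_det F x y * \<nu> = r^2" by (auto simp: QR_iff)
  then have "cyclic_det F x y = \<nu> * (r/\<nu>)^2" using \<nu>0 by (simp add: field_simps power2_eq_square)
  moreover have "r/\<nu> \<noteq> 0" using r \<nu>0 by simp
  ultimately show ?thesis
    using conj_twisted_if_twisted_value[OF two_nonzero_odd_card[OF assms(1)] \<nu>0 assms(4)] by blast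
qed

lemma classify_scalar:
  fixes F :: "'a::field^2^2"
  assumes "(2::'a) \<noteq> 0" "trace F^2 = 4 * det F" "F$1$2 = 0" "F$2$1 = 0"
  shows "F = scalar (trace F)"
proof -
  have "(F$2$2 - F$1$1)^2 = 0" using assms(2-4) discriminant_entries[of F] by simp
  then have "F$1$1 = F$2$2" by simp
  then show ?thesis using assms(1,3,4) mat2_eta[of F]
    by (simp add: scalar_def trace_def UNIV_2 field_simps)
qed

text \<open>(2d) With zero discriminant, -\<beta>\<gamma> is a square, so \<beta> and \<gamma> have the same quadratic
  character when -1 is a square.\<close>
lemma entries_not_mixed:
  fixes F :: "'a::field^2^2" and i :: 'a
  assumes "(2::'a) \<noteq> 0" "i^2 = -1" "trace F^2 = 4 * det F"
  shows "\<not> ((F$1$2 \<in> QR \<and> F$2$1 \<in> QN) \<or> (F$1$2 \<in> QN \<and> F$2$1 \<in> QR))"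
proof -
  have four: "(4::'a) \<noteq> 0" using four_nonzero[OF assms(1)] .
  then have prod: "F$1$2 * F$2$1 = - (((F$2$2 - F$1$1) / 2)^2)"
    using assms(1,3) discriminant_entries[of F] by (simp add: field_simps power2_eq_square)
  have mixed: False if yz: "y \<in> QR" "z \<in> QN" "y * z = - (((F$2$2 - F$1$1) / 2)^2)" for y z
  proof -
    obtain s where s: "s \<noteq> 0" "y = s^2" using yz(1) by (auto simp: QR_iff)
    have "- z = ((F$2$2 - F$1$1) / 2 / s)^2" using yz(3) s four by (simp add: field_simps power2_eq_square)
    moreover have "- z \<noteq> 0" using yz(2) by (simp add: QN_def)
    ultimately have "- z \<in> QR" unfolding QR_iff by (metis power_zero_numeral)
    then show False using QN_uminus[OF assms(2) yz(2)] by (simp add: QN_def)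
  qed
  show ?thesis using mixed[of "F$1$2" "F$2$1"] mixed[of "F$2$1" "F$1$2"] prod by (auto simp: mult.commute)
qed

lemma classification:
  fixes F :: "'a::{finite,field}^2^2" and i \<nu> :: 'a
  assumes odd: "odd CARD('a)" and i: "i^2 = -1" and \<nu>: "\<nu> \<in> QN"
  shows "(trace F^2 - 4 * det F \<noteq> 0 \<longrightarrow> F \<in> conj_class (companion (det F) (trace F))) \<and>
         (trace F^2 - 4 * det F = 0 \<longrightarrow>
            ((F$1$2 \<in> QR \<or> F$2$1 \<in> QR) \<longrightarrow> F \<in> conj_class (companion (det F) (trace F))) \<and>
            ((F$1$2 \<in> QN \<or> F$2$1 \<in> QN) \<longrightarrow> F \<in> conj_class (twisted \<nu> (trace F))) \<and>
            ((F$1$2 = 0 \<and> F$2$1 = 0) \<longrightarrow> F \<in> conj_class (scalar (trace F))) \<and>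
            \<not> ((F$1$2 \<in> QR \<and> F$2$1 \<in> QN) \<or> (F$1$2 \<in> QN \<and> F$2$1 \<in> QR)))"
  using classify_nondegenerate[OF odd] classify_square_entry[OF i]
    classify_nonsquare_entry[OF odd i \<nu>] classify_scalar[OF two_nonzero_odd_card[OF odd]]
    entries_not_mixed[OF two_nonzero_odd_card[OF odd] i] conj_refl
  by (metis eq_iff_diff_eq_0)

lemma fourth_roots_of_unity_times_2:
  fixes i t :: "'a::field"
  assumes "i^2 = -1"
  shows "t \<in> {2, -2, 2*i, -2*i} \<longleftrightarrow> t^2 = 4 \<or> t^2 = -4"
proof
  assume "t \<in> {2, -2, 2*i, -2*i}" then show "t^2 = 4 \<or> t^2 = -4"
    using assms by (auto simp: power_mult_distrib)
next
  assume "t^2 = 4 \<or> t^2 = -4"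
  then have "t^2 = 2^2 \<or> t^2 = (2*i)^2" using assms by (auto simp: power_mult_distrib)
  then show "t \<in> {2, -2, 2*i, -2*i}" using power2_eq_iff by fastforce
qed

lemma card_fourth_roots_of_unity_times_2:
  fixes i :: "'a::field"
  assumes "(2::'a) \<noteq> 0" "i^2 = -1"
  shows "card {2, -2, 2*i, -2*i} = 4"
proof -
  have "(1::'a) \<noteq> -1" using one_ne_minus_one[OF assms(1)] .
  then have "distinct [1, -1, i, -i]" using assms by (auto simp: minus_equation_iff[of i])
  have "{2, -2, 2*i, -2*i} = (\<lambda>x. 2*x) ` set [1, -1, i, -i]" by simp
  moreover have "inj ((*) (2::'a))" using assms(1) by (simp add: inj_on_def)
  ultimately have "card {2, -2, 2*i, -2*i} = card (set [1, -1, i, -i])"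
    by (metis card_image inj_on_subset subset_UNIV)
  also have "\<dots> = length [1, -1, i, -i]" using \<open>distinct [1, -1, i, -i]\<close> by (rule distinct_card)
  also have "\<dots> = 4" by simp
  finally show ?thesis .
qed

lemma conj_class_of_ESL_listed:
  fixes i \<nu> :: "'a::{finite,field}"
  assumes odd: "odd CARD('a)" and i: "i^2 = -1" and \<nu>: "\<nu> \<in> QN" and A: "A \<in> ESL"
  defines "T \<equiv> {2, -2, 2*i, -2*i}"
  shows "conj_class A \<in> (\<Union>\<Delta>\<in>{1,-1}. range (\<lambda>t. conj_class (companion \<Delta> t)))
             \<union> (\<lambda>t. conj_class (twisted \<nu> t)) ` T \<union> (\<lambda>t. conj_class (scalar t)) ` T"
proof -
  have \<Delta>: "det A \<in> {1, -1}" using A by (simp add: ESL_def)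
  note criteria = classification[OF odd i \<nu>, of A]
  show ?thesis
  proof (cases "trace A^2 - 4 * det A = 0")
    case False
    then have "A \<in> conj_class (companion (det A) (trace A))" using criteria by simp
    then have "conj_class A = conj_class (companion (det A) (trace A))" by (rule conj_class_eq)
    then show ?thesis using \<Delta> by blast
  next
    case True
    then have t: "trace A \<in> T" using \<Delta> fourth_roots_of_unity_times_2[OF i] by (auto simp: T_def)
    consider "A$1$2 = 0 \<and> A$2$1 = 0" | "A$1$2 \<in> QR \<or> A$2$1 \<in> QR" | "A$1$2 \<in> QN \<or> A$2$1 \<in> QN"
      using nonzero_QR_or_QN by blast
    then show ?thesis
    proof cases
      case 1
      then have "A \<in> conj_class (scalar (trace A))" using criteria True by simp
      then have "conj_class A = conj_class (scalar (trace A))" by (rule conj_class_eq)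
      then show ?thesis using t by blast
    next
      case 2
      then have "A \<in> conj_class (companion (det A) (trace A))" using criteria True by simp
      then have "conj_class A = conj_class (companion (det A) (trace A))" by (rule conj_class_eq)
      then show ?thesis using \<Delta> by blast
    next
      case 3
      then have "A \<in> conj_class (twisted \<nu> (trace A))" using criteria True by simp
      then have "conj_class A = conj_class (twisted \<nu> (trace A))" by (rule conj_class_eq)
      then show ?thesis using t by blast
    qed
  qed
qed

text \<open>The listed representatives have determinant \<plusminus>1: for the last two kinds it is t^2/4.\<close>
lemma listed_representatives_in_ESL:
  fixes i \<nu> t :: "'a::field"
  assumes "(2::'a) \<noteq> 0" "i^2 = -1" "\<nu> \<noteq> 0" "t \<in> {2, -2, 2*i, -2*i}"
  shows "twisted \<nu> t \<in> ESL" "scalar t \<in> ESL"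
proof -
  have "t^2/4 = 1 \<or> t^2/4 = -1"
    using assms(2,4) four_nonzero[OF assms(1)] fourth_roots_of_unity_times_2[OF assms(2), of t]
    by auto
  then show "twisted \<nu> t \<in> ESL" "scalar t \<in> ESL"
    by (simp_all add: ESL_def det_twisted[OF assms(3)] det_scalar)
qed

lemma conj_classes_of_ESL:
  fixes i \<nu> :: "'a::{finite,field}"
  assumes odd: "odd CARD('a)" and i: "i^2 = -1" and \<nu>: "\<nu> \<in> QN"
  defines "T \<equiv> {2, -2, 2*i, -2*i}"
  shows "{conj_class A | A. A \<in> ESL}
           = (\<Union>\<Delta>\<in>{1,-1}. range (\<lambda>t. conj_class (companion \<Delta> t)))
             \<union> (\<lambda>t. conj_class (twisted \<nu> t)) ` T \<union> (\<lambda>t. conj_class (scalar t)) ` T"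
    (is "?classes = ?companions \<union> ?twisteds \<union> ?scalars")
proof (intro equalityI subsetI)
  fix X assume "X \<in> ?classes"
  then obtain A where "A \<in> ESL" "X = conj_class A" by blast
  then show "X \<in> ?companions \<union> ?twisteds \<union> ?scalars"
    unfolding T_def using conj_class_of_ESL_listed[OF odd i \<nu>] by simp
next
  have \<nu>0: "\<nu> \<noteq> 0" using \<nu> by (simp add: QN_def)
  note in_ESL = listed_representatives_in_ESL[OF two_nonzero_odd_card[OF odd] i \<nu>0]
  fix X assume "X \<in> ?companions \<union> ?twisteds \<union> ?scalars"
  then show "X \<in> ?classes"
  proof (elim UnE)
    assume "X \<in> ?companions"
    then obtain \<Delta> t where "\<Delta> \<in> {1, -1}" "X = conj_class (companion \<Delta> t)" by blast
    moreover have "companion \<Delta> t \<in> ESL" if "\<Delta> \<in> {1, -1}" for \<Delta> t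
      using that by (auto simp: ESL_def det_companion)
    ultimately show ?thesis by blast
  next
    assume "X \<in> ?twisteds"
    then obtain t where "t \<in> T" "X = conj_class (twisted \<nu> t)" by blast
    then show ?thesis using in_ESL(1) unfolding T_def by auto
  next
    assume "X \<in> ?scalars"
    then obtain t where "t \<in> T" "X = conj_class (scalar t)" by blast
    then show ?thesis using in_ESL(2) unfolding T_def by auto
  qed
qed

text \<open>The twisted form is \<nu> times a square, so it never takes a nonzero square value.\<close>
lemma twisted_values_not_QR:
  fixes \<nu> :: "'a::field"
  assumes "(2::'a) \<noteq> 0" "\<nu> \<in> QN"
  shows "cyclic_det (twisted \<nu> t) x y \<notin> QR"
proof
  have \<nu>0: "\<nu> \<noteq> 0" using assms(2) by (simp add: QN_def)
  define r where "r = x + t*y/(2*\<nu>)"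
  assume "cyclic_det (twisted \<nu> t) x y \<in> QR"
  then obtain s where s: "s \<noteq> 0" "\<nu> * r^2 = s^2"
    using cyclic_det_twisted[OF assms(1) \<nu>0] by (auto simp: QR_iff r_def)
  then have "r \<noteq> 0" by auto
  then have "\<nu> = (s/r)^2" "s/r \<noteq> 0" using s by (simp_all add: field_simps power2_eq_square)
  then have "\<nu> \<in> QR" unfolding QR_iff by blast
  then show False using assms(2) by (simp add: QN_def)
qed

text \<open>The listed representatives lie in pairwise distinct classes: companion matrices are
  separated by (det, trace); the three families by the values of their forms (squares, \<nu> times
  squares, zero), which are invariant up to sign and -1 is a square.\<close>
lemma companion_class_inj:
  "conj_class (companion \<Delta> t) = conj_class (companion \<Delta>' t') \<Longrightarrow> \<Delta> = \<Delta>' \<and> t = (t'::'a::field)"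
  by (metis conj_class_eq_invariants det_companion trace_companion)

lemma twisted_class_inj:
  "conj_class (twisted \<nu> t) = conj_class (twisted \<nu> t') \<Longrightarrow> t = (t'::'a::field)"
  by (metis conj_class_eq_invariants trace_twisted)

lemma scalar_class_inj:
  "(2::'a::field) \<noteq> 0 \<Longrightarrow> conj_class (scalar t) = conj_class (scalar t') \<Longrightarrow> t = (t'::'a)"
  by (metis conj_class_eq_invariants trace_scalar)

lemma companion_class_ne_twisted:
  fixes i \<nu> :: "'a::field"
  assumes "(2::'a) \<noteq> 0" "i^2 = -1" "\<nu> \<in> QN"
  shows "conj_class (companion \<Delta> t) \<noteq> conj_class (twisted \<nu> u)"
proof
  assume "conj_class (companion \<Delta> t) = conj_class (twisted \<nu> u)"
  then have "companion \<Delta> t \<in> conj_class (twisted \<nu> u)" using conj_refl by metis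
  from cyclic_det_conj_value[OF this, of 1 0] obtain x y
    where "1 = cyclic_det (twisted \<nu> u) x y \<or> 1 = - cyclic_det (twisted \<nu> u) x y"
    by (auto simp: cyclic_det_companion)
  moreover have one: "(1::'a) \<in> QR" unfolding QR_iff by (rule exI[of _ 1]) simp
  moreover have "(-1::'a) \<in> QR" using QR_uminus[OF assms(2) one] .
  ultimately have "cyclic_det (twisted \<nu> u) x y \<in> QR" by (metis minus_minus)
  then show False using twisted_values_not_QR[OF assms(1,3)] by blast
qed

lemma companion_class_ne_scalar: "conj_class (companion \<Delta> t) \<noteq> conj_class (scalar (u::'a::field))"
proof
  assume "conj_class (companion \<Delta> t) = conj_class (scalar u)"
  then have "companion \<Delta> t \<in> conj_class (scalar u)" using conj_refl by metis
  from cyclic_det_conj_value[OF this, of 1 0] show False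
    by (auto simp: cyclic_det_companion cyclic_det_scalar)
qed

lemma twisted_class_ne_scalar:
  "(\<nu>::'a::field) \<noteq> 0 \<Longrightarrow> conj_class (twisted \<nu> t) \<noteq> conj_class (scalar u)"
proof
  assume "\<nu> \<noteq> 0" "conj_class (twisted \<nu> t) = conj_class (scalar u)"
  then have "twisted \<nu> t \<in> conj_class (scalar u)" using conj_refl by metis
  from cyclic_det_conj_value[OF this, of 1 0] show False
    using \<open>\<nu> \<noteq> 0\<close> by (auto simp: twisted_def cyclic_det_mat2 cyclic_det_scalar)
qed

lemma card_companion_classes:
  assumes "(2::'a::{finite,field}) \<noteq> 0"
  shows "card (\<Union>\<Delta>\<in>{1,-1::'a}. range (\<lambda>t. conj_class (companion \<Delta> t))) = 2 * CARD('a)"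
proof -
  have "(\<Union>\<Delta>\<in>{1,-1::'a}. range (\<lambda>t. conj_class (companion \<Delta> t)))
          = (\<lambda>(\<Delta>, t). conj_class (companion \<Delta> t)) ` ({1, -1} \<times> UNIV)"
    by force
  moreover have "inj_on (\<lambda>(\<Delta>, t). conj_class (companion \<Delta> t)) ({1, -1::'a} \<times> UNIV)"
    by (auto simp: inj_on_def dest: companion_class_inj)
  moreover have "card ({1, -1::'a} \<times> (UNIV::'a set)) = 2 * CARD('a)"
    using one_ne_minus_one[OF assms] by (simp add: card_cartesian_product)
  ultimately show ?thesis by (metis card_image)
qed

lemma listed_classes_disjoint:
  fixes i \<nu> :: "'a::field"
  assumes "(2::'a) \<noteq> 0" "i^2 = -1" "\<nu> \<in> QN"
  shows "(\<Union>\<Delta>\<in>{1,-1}. range (\<lambda>t. conj_class (companion \<Delta> t))) \<inter> (\<lambda>t. conj_class (twisted \<nu> t)) ` T = {}"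
    and "((\<Union>\<Delta>\<in>{1,-1}. range (\<lambda>t. conj_class (companion \<Delta> t))) \<union> (\<lambda>t. conj_class (twisted \<nu> t)) ` T)
           \<inter> (\<lambda>t. conj_class (scalar t)) ` U = {}"
proof -
  have \<nu>0: "\<nu> \<noteq> 0" using assms(3) by (simp add: QN_def)
  show "(\<Union>\<Delta>\<in>{1,-1}. range (\<lambda>t. conj_class (companion \<Delta> t))) \<inter> (\<lambda>t. conj_class (twisted \<nu> t)) ` T = {}"
    using companion_class_ne_twisted[OF assms] by blast
  show "((\<Union>\<Delta>\<in>{1,-1}. range (\<lambda>t. conj_class (companion \<Delta> t))) \<union> (\<lambda>t. conj_class (twisted \<nu> t)) ` T)
           \<inter> (\<lambda>t. conj_class (scalar t)) ` U = {}"
    using companion_class_ne_scalar twisted_class_ne_scalar[OF \<nu>0] by blast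
qed

lemma card_conj_classes:
  fixes i \<nu> :: "'a::{finite,field}"
  assumes odd: "odd CARD('a)" and i: "i^2 = -1" and \<nu>: "\<nu> \<in> QN"
  defines "T \<equiv> {2, -2, 2*i, -2*i}"
  shows "card ((\<Union>\<Delta>\<in>{1,-1}. range (\<lambda>t. conj_class (companion \<Delta> t)))
             \<union> (\<lambda>t. conj_class (twisted \<nu> t)) ` T \<union> (\<lambda>t. conj_class (scalar t)) ` T)
           = 2 * CARD('a) + 8"
proof -
  have two: "(2::'a) \<noteq> 0" using two_nonzero_odd_card[OF odd] .
  have T: "card T = 4" unfolding T_def using card_fourth_roots_of_unity_times_2[OF two i] .
  have twisteds: "card ((\<lambda>t. conj_class (twisted \<nu> t)) ` T) = 4"
    using T by (subst card_image) (auto simp: inj_on_def dest: twisted_class_inj)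
  have scalars: "card ((\<lambda>t. conj_class (scalar t)) ` T) = 4"
    using T by (subst card_image) (auto simp: inj_on_def dest: scalar_class_inj[OF two])
  show ?thesis
    using listed_classes_disjoint[OF two i \<nu>] card_companion_classes[OF two] twisteds scalars
    by (simp add: card_Un_disjoint)
qed

theorem mainTheorem4:
  fixes i \<nu> :: "'a::{finite,field}" and p l :: nat
    and C :: "'a \<Rightarrow> 'a \<Rightarrow> ('a^2^2) set" and Cb D :: "'a \<Rightarrow> ('a^2^2) set"
  assumes "prime p" and "odd p" and "l \<ge> 1" and "CARD('a) = p ^ l"
    and "CARD('a) mod 4 = 1"
    and "i^2 = -1" and "\<nu> \<in> QN"
    and C_def: "\<And>\<Delta> t. C \<Delta> t = conj_class (mat2 0 (-\<Delta>) 1 t)"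
    and Cb_def: "\<And>t. Cb t = conj_class (mat2 0 (-(t^2 / (4 * \<nu>))) \<nu> t)"
    and D_def: "\<And>t. D t = conj_class (mat2 (t/2) 0 0 (t/2))"
  shows "{conj_class A | A. A \<in> ESL}
           = (\<Union>\<Delta>\<in>{1,-1}. range (C \<Delta>)) \<union> Cb ` {2,-2,2*i,-2*i} \<union> D ` {2,-2,2*i,-2*i}
      \<and> card ((\<Union>\<Delta>\<in>{1,-1}. range (C \<Delta>)) \<union> Cb ` {2,-2,2*i,-2*i} \<union> D ` {2,-2,2*i,-2*i})
           = 2 * CARD('a) + 8
      \<and> (\<forall>F\<in>ESL. let \<Delta> = det F; t = trace F; \<beta> = F$1$2; \<gamma> = F$2$1 in
           (t^2 - 4*\<Delta> \<noteq> 0 \<longrightarrow> F \<in> C \<Delta> t) \<and>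
           (t^2 - 4*\<Delta> = 0 \<longrightarrow>
              ((\<beta> \<in> QR \<or> \<gamma> \<in> QR) \<longrightarrow> F \<in> C \<Delta> t) \<and>
              ((\<beta> \<in> QN \<or> \<gamma> \<in> QN) \<longrightarrow> F \<in> Cb t) \<and>
              ((\<beta> = 0 \<and> \<gamma> = 0) \<longrightarrow> F \<in> D t) \<and>
              \<not> ((\<beta> \<in> QR \<and> \<gamma> \<in> QN) \<or> (\<beta> \<in> QN \<and> \<gamma> \<in> QR))))"
proof -
  have odd: "odd CARD('a)" using assms(5) by presburger
  note hyps = odd assms(6,7)
  have "C = (\<lambda>\<Delta> t. conj_class (companion \<Delta> t))" "Cb = (\<lambda>t. conj_class (twisted \<nu> t))"
       "D = (\<lambda>t. conj_class (scalar t))"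
    using C_def Cb_def D_def by (simp_all add: fun_eq_iff companion_def twisted_def scalar_def)
  then show ?thesis unfolding Let_def
    using conj_classes_of_ESL[OF hyps] card_conj_classes[OF hyps] classification[OF hyps] by simp
qed

end
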